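(* Let $U=(E,\mathcal{D},\rho)$ and $U'=(E,\mathcal{D}',\rho')$ be U-matroids, with base polyhedra $\mathfrak p=\mathcal{B}(U)$ and $\mathfrak p'=\mathcal{B}(U')$. Then $U'$ is a lattice extension of $U$ (i.e. $\mathcal{D}\subseteq\mathcal{D}'$ and $\rho'|_{\mathcal{D}}=\rho$) if and only if $\mathfrak p'$ is a sheared polyhedron of $\mathfrak p$, i.e. $\mathfrak p'\subseteq\mathfrak p$ and the vertex set of $\mathfrak p'$ contains the vertex set of $\mathfrak p$.
   Context: A U-matroid is a triple $(E,\mathcal{D},\rho)$ with $E$ finite, $\mathcal{D}\subseteq2^E$ an accessible distributive lattice of sets, and $\rho:\mathcal{D}\to\mathbb{N}$ with $\rho(\emptyset)=0$, monotone, submodular, with unit increase. Its base polyhedron is $\mathcal{B}(U)=\{\mathbf{x}\in\mathbb{R}^E:\mathbf{x}(A)\le\rho(A)\ \forall A\in\mathcal{D},\ \mathbf{x}(E)=\rho(E)\}$. *)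

theory Defs
  imports Complex_Main
begin

definition accessible_distributive_lattice :: "'a set \<Rightarrow> 'a set set \<Rightarrow> bool" where
  "accessible_distributive_lattice E D \<longleftrightarrow>
     D \<subseteq> Pow E \<and> {} \<in> D \<and> E \<in> D \<and>
     (\<forall>A\<in>D. \<forall>B\<in>D. A \<union> B \<in> D \<and> A \<inter> B \<in> D) \<and>
     (\<forall>A\<in>D. A \<noteq> {} \<longrightarrow> (\<exists>a\<in>A. A - {a} \<in> D))"

text \<open>U-matroid (E, D, rho); rho is only meaningful on D.\<close>
definition U_matroid :: "'a set \<Rightarrow> 'a set set \<Rightarrow> ('a set \<Rightarrow> nat) \<Rightarrow> bool" where
  "U_matroid E D \<rho> \<longleftrightarrow>
     finite E \<and> accessible_distributive_lattice E D \<and>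
     \<rho> {} = 0 \<and>
     (\<forall>A\<in>D. \<forall>B\<in>D. A \<subseteq> B \<longrightarrow> \<rho> A \<le> \<rho> B) \<and>
     (\<forall>A\<in>D. \<forall>B\<in>D. \<rho> (A \<union> B) + \<rho> (A \<inter> B) \<le> \<rho> A + \<rho> B) \<and>
     (\<forall>A\<in>D. \<forall>a. A \<union> {a} \<in> D \<longrightarrow> \<rho> (A \<union> {a}) \<le> \<rho> A + 1)"

text \<open>Vectors in R^E are functions 'a => real vanishing outside E.\<close>
definition base_polyhedron :: "'a set \<Rightarrow> 'a set set \<Rightarrow> ('a set \<Rightarrow> nat) \<Rightarrow> ('a \<Rightarrow> real) set" where
  "base_polyhedron E D \<rho> =
     {x. (\<forall>e. e \<notin> E \<longrightarrow> x e = 0) \<and>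
         (\<forall>A\<in>D. (\<Sum>e\<in>A. x e) \<le> real (\<rho> A)) \<and>
         (\<Sum>e\<in>E. x e) = real (\<rho> E)}"

definition vertices :: "('a \<Rightarrow> real) set \<Rightarrow> ('a \<Rightarrow> real) set" where
  "vertices P = {x \<in> P. \<forall>a\<in>P. \<forall>b\<in>P. a \<noteq> b \<longrightarrow>
       \<not> (\<exists>u::real. 0 < u \<and> u < 1 \<and> x = (\<lambda>e. (1 - u) * a e + u * b e))}"

definition lattice_extension ::
  "'a set set \<Rightarrow> ('a set \<Rightarrow> nat) \<Rightarrow> 'a set set \<Rightarrow> ('a set \<Rightarrow> nat) \<Rightarrow> bool" where
  "lattice_extension D \<rho> D' \<rho>' \<longleftrightarrow> D \<subseteq> D' \<and> (\<forall>A\<in>D. \<rho>' A = \<rho> A)"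

definition sheared_polyhedron :: "('a \<Rightarrow> real) set \<Rightarrow> ('a \<Rightarrow> real) set \<Rightarrow> bool" where
  "sheared_polyhedron P' P \<longleftrightarrow> P' \<subseteq> P \<and> vertices P \<subseteq> vertices P'"

end

theory Submission
  imports Defs
begin

text \<open>The vertices of a base polyhedron are its greedy points: the points x vanishing off E for
  which some saturated chain {} = S0 < S1 < ... < Sn = E in D consists of x-tight sets.
  Such a chain determines x, and submodularity bounds x(B) by \<rho>(B) along it. Conversely, a vertex
  has a tight set separating any two elements of E (otherwise moving mass between them keeps
  the point inside), which lets one peel a tight set down one element at a time.

  A lattice extension keeps every chain tight, so vertices of P = B(U) are vertices of
  P' = B(U'), and P' is cut out by more constraints. Conversely, if some A in D is missing
  from D', there are u in A and v not in A such that every set of D' containing u contains v;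
  then P' is unbounded in direction e_u - e_v and leaves P. Finally \<rho> = \<rho>' on D follows by
  evaluating at A vertices of P and of P' that are tight at A.\<close>

definition tight :: "('a set \<Rightarrow> nat) \<Rightarrow> ('a \<Rightarrow> real) \<Rightarrow> 'a set \<Rightarrow> bool" where
  "tight \<rho> x A \<longleftrightarrow> (\<Sum>e\<in>A. x e) = real (\<rho> A)"

inductive tight_chain :: "'a set set \<Rightarrow> ('a set \<Rightarrow> nat) \<Rightarrow> ('a \<Rightarrow> real) \<Rightarrow> 'a set \<Rightarrow> bool"
  for D \<rho> x where
  empty: "tight_chain D \<rho> x {}"
| insert: "tight_chain D \<rho> x S \<Longrightarrow> c \<notin> S \<Longrightarrow> insert c S \<in> D \<Longrightarrow> tight \<rho> x (insert c S)
    \<Longrightarrow> tight_chain D \<rho> x (insert c S)"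

lemma tight_chain_finite: "tight_chain D \<rho> x S \<Longrightarrow> finite S"
  by (induction rule: tight_chain.induct) auto

lemma tight_chain_cong:
  "tight_chain D \<rho> x S \<Longrightarrow> (\<And>e. e \<in> S \<Longrightarrow> y e = x e) \<Longrightarrow> tight_chain D \<rho> y S"
proof (induction rule: tight_chain.induct)
  case empty
  show ?case by (rule tight_chain.empty)
next
  case (insert S c)
  have "(\<Sum>e\<in>insert c S. y e) = (\<Sum>e\<in>insert c S. x e)"
    using insert.prems by (intro sum.cong) auto
  then have "tight \<rho> y (insert c S)"
    using insert.hyps(4) by (simp add: tight_def)
  with insert show ?case by (auto intro: tight_chain.insert)
qed

lemma tight_chain_lattice_extension:
  assumes "lattice_extension D \<rho> D' \<rho>'"
  shows "tight_chain D \<rho> x S \<Longrightarrow> tight_chain D' \<rho>' x S"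
proof (induction rule: tight_chain.induct)
  case empty
  show ?case by (rule tight_chain.empty)
next
  case (insert S c)
  then have "insert c S \<in> D'" "tight \<rho>' x (insert c S)"
    using assms by (auto simp: lattice_extension_def tight_def)
  with insert show ?case by (auto intro: tight_chain.insert)
qed

definition shift :: "('a \<Rightarrow> real) \<Rightarrow> 'a \<Rightarrow> 'a \<Rightarrow> real \<Rightarrow> 'a \<Rightarrow> real" where
  "shift x u v t = (\<lambda>e. x e + (if e = u then t else 0) - (if e = v then t else 0))"

lemma sum_shift:
  "finite A \<Longrightarrow> (\<Sum>e\<in>A. shift x u v t e) =
     (\<Sum>e\<in>A. x e) + (if u \<in> A then t else 0) - (if v \<in> A then t else 0)"
  by (simp add: shift_def sum.distrib sum_subtractf)

lemma convex_combination_eq_bound: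
  fixes u p q r :: real
  assumes "0 < u" "u < 1" "p \<le> r" "q \<le> r" "(1 - u) * p + u * q = r"
  shows "p = r \<and> q = r"
proof -
  have "(1 - u) * p \<le> (1 - u) * r" "u * q \<le> u * r"
    using assms by (auto intro: mult_left_mono)
  moreover have "p < r \<Longrightarrow> (1 - u) * p < (1 - u) * r" "q < r \<Longrightarrow> u * q < u * r"
    using assms by simp_all
  moreover have "(1 - u) * r + u * r = r" by (simp add: algebra_simps)
  ultimately show ?thesis using assms(3-5) by linarith
qed

lemma vertex_midpoint_eq:
  assumes "x \<in> vertices P" "a \<in> P" "b \<in> P" "x = (\<lambda>e. (a e + b e) / 2)"
  shows "a = b"
proof (rule ccontr)
  assume "a \<noteq> b"
  then have "\<not> (\<exists>w::real. 0 < w \<and> w < 1 \<and> x = (\<lambda>e. (1 - w) * a e + w * b e))"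
    using assms(1-3) unfolding vertices_def by blast
  moreover have "x = (\<lambda>e. (1 - 1 / 2) * a e + 1 / 2 * b e)"
    using assms(4) by (simp add: field_simps)
  moreover have "(0::real) < 1 / 2" "(1 / 2 :: real) < 1" by simp_all
  ultimately show False by blast
qed

locale umatroid =
  fixes E :: "'a set" and D :: "'a set set" and \<rho> :: "'a set \<Rightarrow> nat"
  assumes U_matroid: "U_matroid E D \<rho>"
begin

lemma finite_E: "finite E"
  using U_matroid by (simp add: U_matroid_def)

lemma subset_E: "A \<in> D \<Longrightarrow> A \<subseteq> E"
  using U_matroid by (auto simp: U_matroid_def accessible_distributive_lattice_def)

lemma finite_mem: "A \<in> D \<Longrightarrow> finite A"
  using subset_E finite_E finite_subset by blast

lemma finite_D: "finite D"
  using subset_E finite_E by (meson Pow_iff finite_Pow_iff finite_subset subsetI)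

lemma empty_mem: "{} \<in> D"
  using U_matroid by (simp add: U_matroid_def accessible_distributive_lattice_def)

lemma E_mem: "E \<in> D"
  using U_matroid by (simp add: U_matroid_def accessible_distributive_lattice_def)

lemma Un_mem: "A \<in> D \<Longrightarrow> B \<in> D \<Longrightarrow> A \<union> B \<in> D"
  using U_matroid by (simp add: U_matroid_def accessible_distributive_lattice_def)

lemma Int_mem: "A \<in> D \<Longrightarrow> B \<in> D \<Longrightarrow> A \<inter> B \<in> D"
  using U_matroid by (simp add: U_matroid_def accessible_distributive_lattice_def)

lemma accessible: "A \<in> D \<Longrightarrow> A \<noteq> {} \<Longrightarrow> \<exists>a\<in>A. A - {a} \<in> D"
  using U_matroid by (simp add: U_matroid_def accessible_distributive_lattice_def)

lemma rank_empty: "\<rho> {} = 0"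
  using U_matroid by (simp add: U_matroid_def)

lemma submodular:
  assumes "A \<in> D" "B \<in> D"
  shows "real (\<rho> (A \<union> B)) + real (\<rho> (A \<inter> B)) \<le> real (\<rho> A) + real (\<rho> B)"
proof -
  have "\<rho> (A \<union> B) + \<rho> (A \<inter> B) \<le> \<rho> A + \<rho> B"
    using U_matroid assms by (simp add: U_matroid_def)
  then show ?thesis by (metis of_nat_add of_nat_le_iff)
qed

abbreviation P :: "('a \<Rightarrow> real) set" where
  "P \<equiv> base_polyhedron E D \<rho>"

lemma sum_le_rank: "x \<in> P \<Longrightarrow> A \<in> D \<Longrightarrow> (\<Sum>e\<in>A. x e) \<le> real (\<rho> A)"
  by (simp add: base_polyhedron_def)

lemma tight_chain_mem: "tight_chain D \<rho> x S \<Longrightarrow> S \<in> D"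
  by (induction rule: tight_chain.induct) (simp_all add: empty_mem)

lemma tight_chain_tight: "tight_chain D \<rho> x S \<Longrightarrow> tight \<rho> x S"
  by (induction rule: tight_chain.induct) (simp_all add: tight_def rank_empty)

lemma tight_chain_sum_Int_le:
  assumes "B \<in> D"
  shows "tight_chain D \<rho> x S \<Longrightarrow> (\<Sum>e\<in>B \<inter> S. x e) \<le> real (\<rho> (B \<inter> S))"
proof (induction rule: tight_chain.induct)
  case empty
  show ?case by (simp add: rank_empty)
next
  case (insert S c)
  show ?case
  proof (cases "c \<in> B")
    case False
    then show ?thesis using insert.IH by simp
  next
    case True
    have S: "S \<in> D" "finite S" "tight \<rho> x S"
      using insert.hyps(1) tight_chain_mem tight_chain_finite tight_chain_tight by blast+
    have "x c = real (\<rho> (insert c S)) - real (\<rho> S)"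
      using insert.hyps(2,4) S by (simp add: tight_def)
    moreover have "real (\<rho> (insert c S)) + real (\<rho> (B \<inter> S))
        \<le> real (\<rho> (B \<inter> insert c S)) + real (\<rho> S)"
    proof -
      have "B \<inter> insert c S \<union> S = insert c S" "B \<inter> insert c S \<inter> S = B \<inter> S"
        using True by auto
      then show ?thesis
        using submodular[OF Int_mem[OF assms insert.hyps(3)] S(1)] by simp
    qed
    moreover have "(\<Sum>e\<in>B \<inter> insert c S. x e) = x c + (\<Sum>e\<in>B \<inter> S. x e)"
      using True insert.hyps(2) S(2) by simp
    ultimately show ?thesis using insert.IH by linarith
  qed
qed

lemma tight_chain_mem_base_polyhedron:
  assumes "tight_chain D \<rho> x E" "\<forall>e. e \<notin> E \<longrightarrow> x e = 0"
  shows "x \<in> P"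
proof -
  have "(\<Sum>e\<in>B. x e) \<le> real (\<rho> B)" if "B \<in> D" for B
    using tight_chain_sum_Int_le[OF that assms(1)] subset_E[OF that] by (simp add: Int_absorb2)
  then show ?thesis
    using assms tight_chain_tight[OF assms(1)] by (simp add: base_polyhedron_def tight_def)
qed

lemma tight_chain_convex_combination:
  assumes "a \<in> P" "b \<in> P" "0 < u" "u < 1" and x: "x = (\<lambda>e. (1 - u) * a e + u * b e)"
  shows "tight_chain D \<rho> x S \<Longrightarrow> \<forall>e\<in>S. a e = x e \<and> b e = x e"
proof (induction rule: tight_chain.induct)
  case empty
  show ?case by simp
next
  case (insert S c)
  have "tight \<rho> a (insert c S) \<and> tight \<rho> b (insert c S)"
  proof -
    have "(\<Sum>e\<in>insert c S. x e) = (1 - u) * (\<Sum>e\<in>insert c S. a e) + u * (\<Sum>e\<in>insert c S. b e)"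
      using x by (simp add: sum.distrib sum_distrib_left)
    then show ?thesis
      using convex_combination_eq_bound[OF assms(3,4) sum_le_rank[OF assms(1) insert.hyps(3)]
          sum_le_rank[OF assms(2) insert.hyps(3)]] insert.hyps(4)
      by (simp add: tight_def)
  qed
  moreover have "(\<Sum>e\<in>S. a e) = (\<Sum>e\<in>S. x e)" "(\<Sum>e\<in>S. b e) = (\<Sum>e\<in>S. x e)"
    using insert.IH by (auto intro: sum.cong)
  moreover have "finite S" "tight \<rho> x (insert c S)"
    using insert.hyps tight_chain_finite by blast+
  ultimately have "a c = x c" "b c = x c"
    using insert.hyps(2) by (simp_all add: tight_def)
  with insert.IH show ?case by simp
qed

lemma tight_chain_vertex:
  assumes "tight_chain D \<rho> x E" "\<forall>e. e \<notin> E \<longrightarrow> x e = 0"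
  shows "x \<in> vertices P"
proof -
  have "a = b" if "a \<in> P" "b \<in> P" "0 < u" "u < 1" "x = (\<lambda>e. (1 - u) * a e + u * b e)" for a b u
  proof
    fix e
    show "a e = b e"
    proof (cases "e \<in> E")
      case True
      then show ?thesis using tight_chain_convex_combination[OF that assms(1)] by simp
    next
      case False
      then show ?thesis using that(1,2) by (simp add: base_polyhedron_def)
    qed
  qed
  then show ?thesis
    using tight_chain_mem_base_polyhedron[OF assms] unfolding vertices_def by blast
qed

lemma tight_Un_Int:
  assumes "x \<in> P" "A \<in> D" "B \<in> D" "tight \<rho> x A" "tight \<rho> x B"
  shows "tight \<rho> x (A \<union> B)" "tight \<rho> x (A \<inter> B)"
proof -
  have "(\<Sum>e\<in>A \<union> B. x e) + (\<Sum>e\<in>A \<inter> B. x e) = (\<Sum>e\<in>A. x e) + (\<Sum>e\<in>B. x e)"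
    using finite_mem assms(2,3) by (simp add: sum.union_inter)
  moreover have "(\<Sum>e\<in>A \<union> B. x e) \<le> real (\<rho> (A \<union> B))" "(\<Sum>e\<in>A \<inter> B. x e) \<le> real (\<rho> (A \<inter> B))"
    using sum_le_rank assms(1-3) Un_mem Int_mem by blast+
  ultimately show "tight \<rho> x (A \<union> B)" "tight \<rho> x (A \<inter> B)"
    using submodular[OF assms(2,3)] assms(4,5) unfolding tight_def by linarith+
qed

lemma slack_lower_bound:
  assumes "x \<in> P"
  shows "\<exists>\<epsilon>>0. \<forall>A\<in>D. \<not> tight \<rho> x A \<longrightarrow> (\<Sum>e\<in>A. x e) + \<epsilon> \<le> real (\<rho> A)"
proof -
  define slacks where "slacks = (\<lambda>A. real (\<rho> A) - (\<Sum>e\<in>A. x e)) ` {A \<in> D. \<not> tight \<rho> x A}"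
  have "finite slacks" using finite_D by (simp add: slacks_def)
  moreover have "\<forall>s\<in>slacks. 0 < s"
    using sum_le_rank[OF assms] by (force simp: slacks_def tight_def)
  ultimately have "0 < Min (insert 1 slacks)" by simp
  moreover have "(\<Sum>e\<in>A. x e) + Min (insert 1 slacks) \<le> real (\<rho> A)"
    if "A \<in> D" "\<not> tight \<rho> x A" for A
  proof -
    have "Min (insert 1 slacks) \<le> real (\<rho> A) - (\<Sum>e\<in>A. x e)"
      using \<open>finite slacks\<close> that by (intro Min_le) (auto simp: slacks_def)
    then show ?thesis by simp
  qed
  ultimately show ?thesis by blast
qed

lemma shift_mem_base_polyhedron:
  assumes "x \<in> P" "u \<in> E" "v \<in> E"
    and "\<And>A. A \<in> D \<Longrightarrow> u \<in> A \<Longrightarrow> v \<notin> A \<Longrightarrow> (\<Sum>e\<in>A. x e) + t \<le> real (\<rho> A)"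
    and "\<And>A. A \<in> D \<Longrightarrow> v \<in> A \<Longrightarrow> u \<notin> A \<Longrightarrow> (\<Sum>e\<in>A. x e) \<le> real (\<rho> A) + t"
  shows "shift x u v t \<in> P"
proof -
  have "(\<Sum>e\<in>A. shift x u v t e) \<le> real (\<rho> A)" if "A \<in> D" for A
    using assms(4,5)[OF that] sum_le_rank[OF assms(1) that] sum_shift[OF finite_mem[OF that]]
    by (cases "u \<in> A"; cases "v \<in> A") auto
  then show ?thesis
    using assms(1-3) sum_shift[OF finite_E] by (auto simp: base_polyhedron_def shift_def)
qed

lemma vertex_separated_by_tight:
  assumes x: "x \<in> vertices P" and "u \<in> E" "v \<in> E" "u \<noteq> v"
  shows "\<exists>C\<in>D. tight \<rho> x C \<and> (u \<in> C \<longleftrightarrow> v \<notin> C)"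
proof (rule ccontr)
  assume "\<not> ?thesis"
  then have unseparated: "\<And>C. C \<in> D \<Longrightarrow> u \<in> C \<longleftrightarrow> v \<notin> C \<Longrightarrow> \<not> tight \<rho> x C" by blast
  have "x \<in> P" using x by (simp add: vertices_def)
  then obtain \<epsilon> where \<epsilon>: "\<epsilon> > 0" "\<And>A. A \<in> D \<Longrightarrow> \<not> tight \<rho> x A \<Longrightarrow> (\<Sum>e\<in>A. x e) + \<epsilon> \<le> real (\<rho> A)"
    using slack_lower_bound by blast
  have "shift x u v t \<in> P" if "\<bar>t\<bar> \<le> \<epsilon>" for t
  proof (rule shift_mem_base_polyhedron[OF \<open>x \<in> P\<close> assms(2,3)])
    have t: "t \<le> \<epsilon>" "- \<epsilon> \<le> t" using that by (simp_all add: abs_le_iff)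
    fix A assume "A \<in> D"
    show "(\<Sum>e\<in>A. x e) + t \<le> real (\<rho> A)" if "u \<in> A" "v \<notin> A"
      using \<epsilon>(2)[OF \<open>A \<in> D\<close> unseparated[OF \<open>A \<in> D\<close>]] that t by simp
    show "(\<Sum>e\<in>A. x e) \<le> real (\<rho> A) + t" if "v \<in> A" "u \<notin> A"
      using \<epsilon>(2)[OF \<open>A \<in> D\<close> unseparated[OF \<open>A \<in> D\<close>]] that t by simp
  qed
  moreover have "x = (\<lambda>e. (shift x u v \<epsilon> e + shift x u v (- \<epsilon>) e) / 2)"
    by (auto simp: shift_def)
  ultimately have "shift x u v \<epsilon> = shift x u v (- \<epsilon>)"
    using \<epsilon>(1) vertex_midpoint_eq[OF x] by simp
  then have "shift x u v \<epsilon> u = shift x u v (- \<epsilon>) u" by simp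
  then show False using \<epsilon>(1) \<open>u \<noteq> v\<close> by (simp add: shift_def)
qed

lemma vertex_tight_remove:
  assumes x: "x \<in> vertices P" and T: "T \<in> D" "T \<noteq> {}" "tight \<rho> x T"
  shows "\<exists>c\<in>T. T - {c} \<in> D \<and> tight \<rho> x (T - {c})"
proof -
  have "x \<in> P" using x by (simp add: vertices_def)
  define F where "F = {S \<in> D. S \<subset> T \<and> tight \<rho> x S}"
  have "finite F" using finite_D by (simp add: F_def)
  moreover have "{} \<in> F" using T empty_mem by (auto simp: F_def tight_def rank_empty)
  ultimately obtain S where S: "S \<in> F" and S_max: "\<And>S'. S' \<in> F \<Longrightarrow> S \<subseteq> S' \<Longrightarrow> S = S'"
    using finite_has_maximal[of F] by blast
  have S_props: "S \<in> D" "S \<subset> T" "tight \<rho> x S" using S by (simp_all add: F_def)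
  then obtain c where c: "c \<in> T - S" by blast
  have "v = c" if v: "v \<in> T - S" for v
  proof (rule ccontr)
    assume "v \<noteq> c"
    moreover have "c \<in> E" "v \<in> E" using c v subset_E[OF T(1)] by auto
    ultimately obtain C where C: "C \<in> D" "tight \<rho> x C" "c \<in> C \<longleftrightarrow> v \<notin> C"
      using vertex_separated_by_tight[OF x] by blast
    have CT: "C \<inter> T \<in> D" "tight \<rho> x (C \<inter> T)"
      using Int_mem tight_Un_Int(2)[OF \<open>x \<in> P\<close> C(1) T(1) C(2) T(3)] C(1) T(1) by blast+
    define S' where "S' = C \<inter> T \<union> S"
    have "S' \<in> D" "tight \<rho> x S'"
      using Un_mem[OF CT(1) S_props(1)] tight_Un_Int(1)[OF \<open>x \<in> P\<close> CT(1) S_props(1) CT(2) S_props(3)]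
      by (simp_all add: S'_def)
    moreover have "S' \<subset> T" using S_props(2) C(3) c v by (auto simp: S'_def)
    ultimately have "S' \<in> F" by (simp add: F_def)
    moreover have "S \<subseteq> S'" "S \<noteq> S'" using C(3) c v by (auto simp: S'_def)
    ultimately show False using S_max by blast
  qed
  then have "T - {c} = S" using c S_props(2) by blast
  then show ?thesis using c S_props by auto
qed

lemma vertex_tight_chain:
  assumes x: "x \<in> vertices P"
  shows "T \<in> D \<Longrightarrow> tight \<rho> x T \<Longrightarrow> tight_chain D \<rho> x T"
proof (induction "card T" arbitrary: T rule: less_induct)
  case less
  show ?case
  proof (cases "T = {}")
    case True
    then show ?thesis by (simp add: tight_chain.empty)
  next
    case False
    then obtain c where c: "c \<in> T" "T - {c} \<in> D" "tight \<rho> x (T - {c})"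
      using vertex_tight_remove[OF x less.prems(1) _ less.prems(2)] by blast
    have "card (T - {c}) < card T"
      using card_Diff1_less[OF finite_mem[OF less.prems(1)] c(1)] .
    then have "tight_chain D \<rho> x (T - {c})"
      using less.hyps c(2,3) by blast
    then have "tight_chain D \<rho> x (insert c (T - {c}))"
      by (rule tight_chain.insert) (simp_all add: insert_absorb[OF c(1)] less.prems)
    then show ?thesis by (simp add: insert_absorb[OF c(1)])
  qed
qed

lemma vertices_base_polyhedron_iff:
  "x \<in> vertices P \<longleftrightarrow> (\<forall>e. e \<notin> E \<longrightarrow> x e = 0) \<and> tight_chain D \<rho> x E"
proof
  assume x: "x \<in> vertices P"
  then have "x \<in> P" by (simp add: vertices_def)
  then show "(\<forall>e. e \<notin> E \<longrightarrow> x e = 0) \<and> tight_chain D \<rho> x E"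
    using vertex_tight_chain[OF x E_mem] by (simp add: base_polyhedron_def tight_def)
next
  assume "(\<forall>e. e \<notin> E \<longrightarrow> x e = 0) \<and> tight_chain D \<rho> x E"
  then show "x \<in> vertices P" using tight_chain_vertex by blast
qed

lemma exists_removable_outside:
  assumes "A \<in> D"
  shows "S \<in> D \<Longrightarrow> \<not> S \<subseteq> A \<Longrightarrow> \<exists>c\<in>S - A. S \<union> A - {c} \<in> D"
proof (induction "card S" arbitrary: S rule: less_induct)
  case less
  then obtain b where b: "b \<in> S" "S - {b} \<in> D" using accessible by blast
  show ?case
  proof (cases "b \<in> A")
    case False
    have "S - {b} \<union> A = S \<union> A - {b}" using False by auto
    then show ?thesis using Un_mem[OF b(2) assms] b(1) False by auto
  next
    case True
    have "card (S - {b}) < card S"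
      using card_Diff1_less[OF finite_mem[OF less.prems(1)] b(1)] .
    moreover have "\<not> S - {b} \<subseteq> A" using less.prems(2) True by blast
    ultimately obtain c where "c \<in> S - {b} - A" "S - {b} \<union> A - {c} \<in> D"
      using less.hyps b(2) by blast
    moreover have "S - {b} \<union> A = S \<union> A" using True b by blast
    ultimately show ?thesis by auto
  qed
qed

lemma exists_removable_avoiding:
  assumes "A \<in> D" "S \<in> D" "S \<noteq> {}"
  shows "\<exists>c\<in>S. S - {c} \<in> D \<and> (A \<subset> S \<longrightarrow> c \<notin> A)"
proof (cases "A \<subset> S")
  case True
  then show ?thesis
    using exists_removable_outside[OF assms(1,2)] by (auto simp: Un_absorb2)
qed (use accessible assms(2,3) in blast)

lemma exists_tight_chain_through:
  assumes A: "A \<in> D"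
  shows "S \<in> D \<Longrightarrow> \<exists>x. tight_chain D \<rho> x S \<and> (\<forall>e. e \<notin> S \<longrightarrow> x e = 0) \<and> (A \<subseteq> S \<longrightarrow> tight \<rho> x A)"
proof (induction "card S" arbitrary: S rule: less_induct)
  case less
  show ?case
  proof (cases "S = {}")
    case True
    then show ?thesis
      by (intro exI[of _ "\<lambda>_. 0"]) (simp add: tight_chain.empty tight_def rank_empty)
  next
    case False
    then obtain c where c: "c \<in> S" "S - {c} \<in> D" "A \<subset> S \<longrightarrow> c \<notin> A"
      using exists_removable_avoiding[OF A less.prems] by blast
    define S0 where "S0 = S - {c}"
    have S: "S = insert c S0" "c \<notin> S0" "S0 \<in> D" "finite S0"
      using c finite_mem[OF less.prems] by (auto simp: S0_def)
    have "card S0 < card S"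
      using card_Diff1_less[OF finite_mem[OF less.prems] c(1)] by (simp add: S0_def)
    then obtain x0 where x0: "tight_chain D \<rho> x0 S0" "\<forall>e. e \<notin> S0 \<longrightarrow> x0 e = 0"
      "A \<subseteq> S0 \<longrightarrow> tight \<rho> x0 A"
      using less.hyps S(3) by blast
    define x where "x = x0(c := real (\<rho> S) - real (\<rho> S0))"
    have sum_x: "(\<Sum>e\<in>B. x e) = (\<Sum>e\<in>B. x0 e)" if "c \<notin> B" for B
      using that by (intro sum.cong) (auto simp: x_def)
    have "tight_chain D \<rho> x S0"
      using x0(1) by (rule tight_chain_cong) (use S(2) in \<open>auto simp: x_def\<close>)
    moreover have "tight \<rho> x S"
      using S sum_x[of S0] tight_chain_tight[OF x0(1)] by (simp add: tight_def x_def)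
    ultimately have "tight_chain D \<rho> x S"
      using tight_chain.insert[of D \<rho> x S0 c] S(1,2) less.prems by simp
    moreover have "\<forall>e. e \<notin> S \<longrightarrow> x e = 0" using x0(2) S by (simp add: x_def)
    moreover have "tight \<rho> x A" if "A \<subseteq> S"
    proof (cases "A = S")
      case True
      then show ?thesis using \<open>tight \<rho> x S\<close> by simp
    next
      case False
      then have "c \<notin> A" "A \<subseteq> S0" using that c by (auto simp: S0_def)
      then show ?thesis using x0(3) sum_x[of A] by (simp add: tight_def)
    qed
    ultimately show ?thesis by blast
  qed
qed

lemma exists_tight_vertex: "A \<in> D \<Longrightarrow> \<exists>x\<in>vertices P. tight \<rho> x A"
  using exists_tight_chain_through[OF _ E_mem] subset_E vertices_base_polyhedron_iff by blast

lemma exists_unseparated_pair: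
  assumes "A \<subseteq> E" "A \<notin> D"
  shows "\<exists>u\<in>A. \<exists>v\<in>E - A. \<forall>B\<in>D. u \<in> B \<longrightarrow> v \<in> B"
proof -
  define F where "F = {W \<in> D. W \<subseteq> A}"
  have "finite F" "{} \<in> F" using finite_D empty_mem by (simp_all add: F_def)
  then obtain W where W: "W \<in> F" and W_max: "\<And>W'. W' \<in> F \<Longrightarrow> W \<subseteq> W' \<Longrightarrow> W = W'"
    using finite_has_maximal[of F] by blast
  moreover have "W \<noteq> A" using W assms(2) by (auto simp: F_def)
  ultimately obtain u where u: "u \<in> A" "u \<notin> W" unfolding F_def by blast
  define G where "G = {B \<in> D. u \<in> B}"
  have "finite G" "E \<in> G" using finite_D E_mem u assms(1) by (auto simp: G_def)
  then obtain M where M: "M \<in> G" and M_min: "\<And>B. B \<in> G \<Longrightarrow> B \<subseteq> M \<Longrightarrow> M = B"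
    using finite_has_minimal[of G] by blast
  have M_least: "M \<subseteq> B" if "B \<in> G" for B
    using M_min[of "M \<inter> B"] M that Int_mem by (auto simp: G_def)
  have "\<not> M \<subseteq> A"
  proof
    assume "M \<subseteq> A"
    then have "W \<union> M \<in> F" using W M Un_mem by (auto simp: F_def G_def)
    then show False using W_max[of "W \<union> M"] M u by (auto simp: G_def)
  qed
  then obtain v where "v \<in> M" "v \<notin> A" by blast
  moreover have "v \<in> E" using \<open>v \<in> M\<close> M subset_E by (auto simp: G_def)
  ultimately show ?thesis using u M_least by (auto simp: G_def)
qed

end

lemma base_polyhedron_subset_if_lattice_extension:
  assumes "U_matroid E D \<rho>" "lattice_extension D \<rho> D' \<rho>'"
  shows "base_polyhedron E D' \<rho>' \<subseteq> base_polyhedron E D \<rho>"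
proof
  interpret U: umatroid E D \<rho> by (rule umatroid.intro) fact
  have ext: "D \<subseteq> D'" "\<And>A. A \<in> D \<Longrightarrow> \<rho>' A = \<rho> A"
    using assms(2) by (auto simp: lattice_extension_def)
  fix x assume x: "x \<in> base_polyhedron E D' \<rho>'"
  have "(\<Sum>e\<in>A. x e) \<le> real (\<rho> A)" if "A \<in> D" for A
  proof -
    have "A \<in> D'" using that ext(1) by blast
    then have "(\<Sum>e\<in>A. x e) \<le> real (\<rho>' A)" using x by (simp add: base_polyhedron_def)
    then show ?thesis using ext(2)[OF that] by simp
  qed
  then show "x \<in> base_polyhedron E D \<rho>"
    using x ext(2)[OF U.E_mem] by (simp add: base_polyhedron_def)
qed

lemma vertices_subset_if_lattice_extension:
  assumes "U_matroid E D \<rho>" "U_matroid E D' \<rho>'" "lattice_extension D \<rho> D' \<rho>'"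
  shows "vertices (base_polyhedron E D \<rho>) \<subseteq> vertices (base_polyhedron E D' \<rho>')"
proof -
  interpret U: umatroid E D \<rho> by (rule umatroid.intro) fact
  interpret U': umatroid E D' \<rho>' by (rule umatroid.intro) fact
  show ?thesis
    using tight_chain_lattice_extension[OF assms(3)]
    by (auto simp: U.vertices_base_polyhedron_iff U'.vertices_base_polyhedron_iff)
qed

lemma lattice_subset_if_base_polyhedron_subset:
  assumes "U_matroid E D \<rho>" "U_matroid E D' \<rho>'"
    and sub: "base_polyhedron E D' \<rho>' \<subseteq> base_polyhedron E D \<rho>"
  shows "D \<subseteq> D'"
proof
  interpret U: umatroid E D \<rho> by (rule umatroid.intro) fact
  interpret U': umatroid E D' \<rho>' by (rule umatroid.intro) fact
  fix A assume A: "A \<in> D"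
  show "A \<in> D'"
  proof (rule ccontr)
    assume "A \<notin> D'"
    then obtain u v where uv: "u \<in> A" "v \<in> E" "v \<notin> A" and unseparated: "\<forall>B\<in>D'. u \<in> B \<longrightarrow> v \<in> B"
      using U'.exists_unseparated_pair U.subset_E[OF A] by blast
    obtain y where "y \<in> vertices (base_polyhedron E D' \<rho>')"
      using U'.exists_tight_vertex[OF U'.E_mem] by blast
    then have y: "y \<in> base_polyhedron E D' \<rho>'" by (simp add: vertices_def)
    define t where "t = \<bar>real (\<rho> A) - (\<Sum>e\<in>A. y e)\<bar> + 1"
    have "u \<in> E" using uv(1) U.subset_E[OF A] by blast
    have "shift y u v t \<in> base_polyhedron E D' \<rho>'"
    proof (rule U'.shift_mem_base_polyhedron[OF y \<open>u \<in> E\<close> uv(2)])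
      fix B assume "B \<in> D'"
      show "(\<Sum>e\<in>B. y e) + t \<le> real (\<rho>' B)" if "u \<in> B" "v \<notin> B"
        using that unseparated \<open>B \<in> D'\<close> by blast
      show "(\<Sum>e\<in>B. y e) \<le> real (\<rho>' B) + t"
        using U'.sum_le_rank[OF y \<open>B \<in> D'\<close>] by (simp add: t_def)
    qed
    then have "(\<Sum>e\<in>A. shift y u v t e) \<le> real (\<rho> A)"
      using sub A U.sum_le_rank by blast
    then show False
      using sum_shift[OF U.finite_mem[OF A]] uv by (simp add: t_def)
  qed
qed

lemma rank_eq_if_sheared:
  assumes "U_matroid E D \<rho>" "U_matroid E D' \<rho>'"
    and sheared: "sheared_polyhedron (base_polyhedron E D' \<rho>') (base_polyhedron E D \<rho>)"
    and A: "A \<in> D"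
  shows "\<rho>' A = \<rho> A"
proof -
  interpret U: umatroid E D \<rho> by (rule umatroid.intro) fact
  interpret U': umatroid E D' \<rho>' by (rule umatroid.intro) fact
  have sub: "base_polyhedron E D' \<rho>' \<subseteq> base_polyhedron E D \<rho>"
    and vert: "vertices (base_polyhedron E D \<rho>) \<subseteq> vertices (base_polyhedron E D' \<rho>')"
    using sheared by (simp_all add: sheared_polyhedron_def)
  have A': "A \<in> D'" using lattice_subset_if_base_polyhedron_subset[OF assms(1,2) sub] A by blast
  obtain x where x: "x \<in> vertices (base_polyhedron E D \<rho>)" "tight \<rho> x A"
    using U.exists_tight_vertex[OF A] by blast
  obtain z where z: "z \<in> vertices (base_polyhedron E D' \<rho>')" "tight \<rho>' z A"
    using U'.exists_tight_vertex[OF A'] by blast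
  have "x \<in> base_polyhedron E D' \<rho>'" "z \<in> base_polyhedron E D \<rho>"
    using x(1) z(1) vert sub by (auto simp: vertices_def)
  then have "real (\<rho> A) \<le> real (\<rho>' A)" "real (\<rho>' A) \<le> real (\<rho> A)"
    using U'.sum_le_rank[of x A] U.sum_le_rank[of z A] A A' x(2) z(2) by (simp_all add: tight_def)
  then show ?thesis by simp
qed

theorem theorem4p4:
  fixes E :: "'a set" and D D' :: "'a set set" and \<rho> \<rho>' :: "'a set \<Rightarrow> nat"
  assumes "U_matroid E D \<rho>" and "U_matroid E D' \<rho>'"
  shows "lattice_extension D \<rho> D' \<rho>' \<longleftrightarrow>
         sheared_polyhedron (base_polyhedron E D' \<rho>') (base_polyhedron E D \<rho>)"
proof
  assume "lattice_extension D \<rho> D' \<rho>'"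
  then show "sheared_polyhedron (base_polyhedron E D' \<rho>') (base_polyhedron E D \<rho>)"
    using base_polyhedron_subset_if_lattice_extension[OF assms(1)]
      vertices_subset_if_lattice_extension[OF assms]
    by (simp add: sheared_polyhedron_def)
next
  assume sheared: "sheared_polyhedron (base_polyhedron E D' \<rho>') (base_polyhedron E D \<rho>)"
  then have "D \<subseteq> D'"
    using lattice_subset_if_base_polyhedron_subset[OF assms] by (simp add: sheared_polyhedron_def)
  then show "lattice_extension D \<rho> D' \<rho>'"
    using rank_eq_if_sheared[OF assms sheared] by (simp add: lattice_extension_def)
qed

end
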